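(* Let $\Gamma$ be an $l$-hyperflower with $t$ twins on $N$ vertices, with eigenvalues $\lambda_1\le\cdots\le\lambda_N$ of its (signless) normalized Laplacian. Then the spectrum of $\Gamma$ is given by: $0$, with multiplicity $N-l$; $t$, with multiplicity $l-1$; and $\lambda_N=N-tl+t$.
   Context: A hypergraph $\Gamma=(\mathcal{V},\mathcal{H})$ has a finite vertex set $\mathcal{V}=\{v_1,\ldots,v_N\}$ and a set $\mathcal{H}$ of nonempty subsets of $\mathcal{V}$ (hyperedges); standing assumption: no isolated vertices. $\deg(v)$ is the number of hyperedges containing $v$, $D$ the diagonal degree matrix, $A$ the matrix with $A_{ii}=0$ and $A_{ij}=-\#\{h\in\mathcal{H}: v_i,v_j\in h\}$ for $i\ne j$, and the (signless) normalized Laplacian is $L=\mathrm{Id}-D^{-1}A$, with real eigenvalues $\lambda_1\le\cdots\le\lambda_N$. An $l$-hyperflower with $t$ twins is a hypergraph whose vertex set is $\mathcal{V}=U\sqcup\mathcal{W}$, where $U$ consists of $t\cdot l$ distinct peripheral vertices $v_{zj}$ ($z=1,\ldots,t$, $j=1,\ldots,l$), and there is a nonempty set $h_1\subseteq\mathcal{W}$ such that $\mathcal{H}=\{h_1\cup\{v_{1j},\ldots,v_{tj}\}: j=1,\ldots,l\}$ (by the no-isolated-vertex assumption, $\mathcal{W}=h_1$). *)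

theory Defs
  imports "Jordan_Normal_Form.Char_Poly"
begin

text \<open>A hypergraph on the vertex set {0..<N} (vertex v_i is represented by the index i-1),
  given by a set H of nonempty hyperedges.\<close>

definition is_hypergraph :: "nat \<Rightarrow> nat set set \<Rightarrow> bool" where
  "is_hypergraph N H \<longleftrightarrow> (\<forall>h\<in>H. h \<noteq> {} \<and> h \<subseteq> {0..<N})"

definition no_isolated_vertices :: "nat \<Rightarrow> nat set set \<Rightarrow> bool" where
  "no_isolated_vertices N H \<longleftrightarrow> (\<forall>i<N. \<exists>h\<in>H. i \<in> h)"

definition hdeg :: "nat set set \<Rightarrow> nat \<Rightarrow> nat" where
  "hdeg H i = card {h\<in>H. i \<in> h}"

definition deg_mat :: "nat \<Rightarrow> nat set set \<Rightarrow> real mat" where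
  "deg_mat N H = mat N N (\<lambda>(i,j). if i = j then real (hdeg H i) else 0)"

text \<open>D^{-1}, written explicitly (degrees are positive when there are no isolated vertices).\<close>
definition inv_deg_mat :: "nat \<Rightarrow> nat set set \<Rightarrow> real mat" where
  "inv_deg_mat N H = mat N N (\<lambda>(i,j). if i = j then 1 / real (hdeg H i) else 0)"

definition adj_mat :: "nat \<Rightarrow> nat set set \<Rightarrow> real mat" where
  "adj_mat N H = mat N N (\<lambda>(i,j). if i = j then 0
                        else - real (card {h\<in>H. i \<in> h \<and> j \<in> h}))"

definition norm_laplacian :: "nat \<Rightarrow> nat set set \<Rightarrow> real mat" where
  "norm_laplacian N H = 1\<^sub>m N - inv_deg_mat N H * adj_mat N H"

definition is_hyperflower :: "nat \<Rightarrow> nat set set \<Rightarrow> nat \<Rightarrow> nat \<Rightarrow> bool" where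
  "is_hyperflower N H l t \<longleftrightarrow>
     (\<exists>p h1. inj_on p ({..<t} \<times> {..<l}) \<and> p ` ({..<t} \<times> {..<l}) \<subseteq> {0..<N} \<and>
        h1 \<noteq> {} \<and> h1 \<subseteq> {0..<N} - p ` ({..<t} \<times> {..<l}) \<and>
        H = {h1 \<union> {p (z, j) | z. z < t} | j. j < l})"

end

theory Submission
  imports Defs
begin

(* With B the N x l incidence matrix and D the degree matrix, the signless normalized Laplacian
   factors as L = (D^-1 B) B^T, so Sylvester's determinant identity gives
   X^l chi_L = X^N chi_G for the l x l matrix G = B^T D^-1 B.  In a hyperflower a core vertex lies
   in all l hyperedges and a peripheral vertex in exactly one, hence G = t I + (|h1| / l) J
   with J the all-ones matrix, whose eigenvalues are t (multiplicity l - 1) and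
   t + |h1| = N - t l + t. *)

lemma det_sylvester:
  fixes U V :: "'a :: field mat"
  assumes U: "U \<in> carrier_mat n m" and V: "V \<in> carrier_mat m n" and y: "y \<noteq> 0"
  shows "det (y \<cdot>\<^sub>m 1\<^sub>m n - U * V) * y ^ m = y ^ n * det (y \<cdot>\<^sub>m 1\<^sub>m m - V * U)"
proof -
  have UV: "U * V \<in> carrier_mat n n" and VU: "V * U \<in> carrier_mat m m" using U V by auto
  define M1 where "M1 = four_block_mat (1\<^sub>m n) U (0\<^sub>m m n) (1\<^sub>m m)"
  define M2 where "M2 = four_block_mat (y \<cdot>\<^sub>m 1\<^sub>m n - U * V) (0\<^sub>m n m) V (1\<^sub>m m)"
  define M3 where "M3 = four_block_mat (y \<cdot>\<^sub>m 1\<^sub>m n) (0\<^sub>m n m) V (1\<^sub>m m - (1/y) \<cdot>\<^sub>m (V * U))"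
  define M4 where "M4 = four_block_mat (1\<^sub>m n) ((1/y) \<cdot>\<^sub>m U) (0\<^sub>m m n) (1\<^sub>m m)"
  have "M1 * M2 = four_block_mat (y \<cdot>\<^sub>m 1\<^sub>m n) U V (1\<^sub>m m)"
    unfolding M1_def M2_def
    by (subst mult_four_block_mat[of _ n n _ m _ m _ _ n _ m]) (use U V UV in auto)
  moreover have "M3 * M4 = four_block_mat (y \<cdot>\<^sub>m 1\<^sub>m n) U V (1\<^sub>m m)"
  proof -
    have "y \<cdot>\<^sub>m 1\<^sub>m n * ((1/y) \<cdot>\<^sub>m U) = U"
      by (rule eq_matI) (use U y in \<open>auto simp: mult_smult_distrib\<close>)
    moreover have "(1/y) \<cdot>\<^sub>m (V * U) + (1\<^sub>m m - (1/y) \<cdot>\<^sub>m (V * U)) = 1\<^sub>m m"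
      by (rule eq_matI) (use U V in auto)
    ultimately show ?thesis
      unfolding M3_def M4_def
      by (subst mult_four_block_mat[of _ n n _ m _ m _ _ n _ m]) (use U V in auto)
  qed
  moreover have "M1 \<in> carrier_mat (n + m) (n + m)" "M2 \<in> carrier_mat (n + m) (n + m)"
    "M3 \<in> carrier_mat (n + m) (n + m)" "M4 \<in> carrier_mat (n + m) (n + m)"
    unfolding M1_def M2_def M3_def M4_def using U V UV VU by auto
  ultimately have "det M1 * det M2 = det M3 * det M4" by (metis det_mult)
  moreover have "det M1 = 1" "det M4 = 1" unfolding M1_def M4_def
    by (subst det_four_block_mat_lower_left_zero[of _ n _ m]; use U in auto)+
  moreover have "det M2 = det (y \<cdot>\<^sub>m 1\<^sub>m n - U * V)" unfolding M2_def
    by (subst det_four_block_mat_upper_right_zero[of _ n _ m]) (use U V in auto)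
  moreover have "1\<^sub>m m - (1/y) \<cdot>\<^sub>m (V * U) = (1/y) \<cdot>\<^sub>m (y \<cdot>\<^sub>m 1\<^sub>m m - V * U)"
    by (rule eq_matI) (use U V y in \<open>auto simp: diff_divide_distrib\<close>)
  then have "det M3 = y ^ n * ((1/y) ^ m * det (y \<cdot>\<^sub>m 1\<^sub>m m - V * U))" unfolding M3_def
    by (subst det_four_block_mat_upper_right_zero[of _ n _ m]) (use U V VU in auto)
  ultimately show ?thesis
    using y by (simp add: power_one_over field_simps)
qed

lemma poly_char_poly:
  assumes "A \<in> carrier_mat n n"
  shows "poly (char_poly A) x = det (x \<cdot>\<^sub>m 1\<^sub>m n - A)"
  unfolding char_poly_def
  by (rule poly_det_cong[of _ n]) (use assms in \<open>auto simp: char_poly_matrix_def\<close>)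

lemma poly_eqI_cofinite:
  fixes p q :: "'a :: {idom, ring_char_0} poly"
  assumes "finite S" and "\<And>x. x \<notin> S \<Longrightarrow> poly p x = poly q x"
  shows "p = q"
proof (rule ccontr)
  assume "p \<noteq> q"
  then have "finite {x. poly (p - q) x = 0}" by (intro poly_roots_finite) simp
  moreover have "- S \<subseteq> {x. poly (p - q) x = 0}" using assms(2) by auto
  ultimately have "finite (UNIV :: 'a set)"
    using assms(1) by (metis Compl_eq_Diff_UNIV finite_Diff2 finite_subset)
  then show False by (simp add: infinite_UNIV_char_0)
qed

lemma char_poly_mult_commute:
  fixes U V :: "'a :: field_char_0 mat"
  assumes U: "U \<in> carrier_mat n m" and V: "V \<in> carrier_mat m n"
  shows "monom 1 m * char_poly (U * V) = monom 1 n * char_poly (V * U)"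
proof (rule poly_eqI_cofinite[of "{0}"])
  fix x :: 'a assume "x \<notin> {0}"
  then show "poly (monom 1 m * char_poly (U * V)) x = poly (monom 1 n * char_poly (V * U)) x"
    using det_sylvester[OF U V, of x] U V
    by (simp add: poly_monom poly_char_poly[of _ n] poly_char_poly[of _ m] mult.commute)
qed simp

lemma char_poly_const_plus_diag:
  fixes a t :: "'a :: field_char_0"
  assumes "l \<ge> 1"
  shows "char_poly (mat l l (\<lambda>(i, j). a + (if i = j then t else 0)))
           = [:- t, 1:] ^ (l - 1) * [:- (t + of_nat l * a), 1:]"
proof (rule poly_eqI_cofinite[of "{t}"])
  fix x assume "x \<notin> {t}"
  then have xt: "x - t \<noteq> 0" by simp
  define C where "C = mat l 1 (\<lambda>_. a)"
  define R where "R = mat 1 l (\<lambda>_. 1 :: 'a)"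
  have C: "C \<in> carrier_mat l 1" and R: "R \<in> carrier_mat 1 l" unfolding C_def R_def by auto
  have "x \<cdot>\<^sub>m 1\<^sub>m l - mat l l (\<lambda>(i, j). a + (if i = j then t else 0)) = (x - t) \<cdot>\<^sub>m 1\<^sub>m l - C * R"
    by (rule eq_matI) (auto simp: C_def R_def scalar_prod_def)
  moreover have "(x - t) \<cdot>\<^sub>m 1\<^sub>m 1 - R * C = mat 1 1 (\<lambda>_. x - t - of_nat l * a)"
    by (rule eq_matI) (auto simp: C_def R_def scalar_prod_def)
  moreover have "(x - t) ^ l = (x - t) ^ (l - 1) * (x - t)"
    using assms by (metis One_nat_def Suc_diff_le diff_Suc_1 power_Suc2)
  ultimately have "det (x \<cdot>\<^sub>m 1\<^sub>m l - mat l l (\<lambda>(i, j). a + (if i = j then t else 0))) * (x - t)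
      = ((x - t) ^ (l - 1) * (x - t - of_nat l * a)) * (x - t)"
    using det_sylvester[OF C R xt] by (simp add: det_single)
  then have "det (x \<cdot>\<^sub>m 1\<^sub>m l - mat l l (\<lambda>(i, j). a + (if i = j then t else 0)))
      = (x - t) ^ (l - 1) * (x - t - of_nat l * a)"
    using xt by simp
  then show "poly (char_poly (mat l l (\<lambda>(i, j). a + (if i = j then t else 0)))) x
      = poly ([:- t, 1:] ^ (l - 1) * [:- (t + of_nat l * a), 1:]) x"
    using xt by (simp add: poly_char_poly[of _ l] poly_power algebra_simps)
qed simp

definition incidence_mat :: "nat \<Rightarrow> nat \<Rightarrow> (nat \<Rightarrow> nat set) \<Rightarrow> real mat" where
  "incidence_mat N m E = mat N m (\<lambda>(i, j). if i \<in> E j then 1 else 0)"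

lemma inv_deg_mat_mult:
  assumes "M \<in> carrier_mat N m"
  shows "inv_deg_mat N H * M = mat N m (\<lambda>(i, j). M $$ (i, j) / real (hdeg H i))"
  by (rule eq_matI)
    (use assms in \<open>auto simp: inv_deg_mat_def scalar_prod_def if_distrib[where f = "\<lambda>c. c * _"]
                     cong: if_cong\<close>)

lemma card_filter_inj_image:
  assumes "inj_on E S"
  shows "card {h \<in> E ` S. Q h} = card {j \<in> S. Q (E j)}"
proof -
  have "{h \<in> E ` S. Q h} = E ` {j \<in> S. Q (E j)}" by auto
  moreover have "inj_on E {j \<in> S. Q (E j)}" using assms by (rule inj_on_subset) auto
  ultimately show ?thesis by (simp add: card_image)
qed

lemma deg_minus_adj_eq_incidence_gram:
  assumes H: "H = E ` {..<m}" and inj: "inj_on E {..<m}"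
  shows "deg_mat N H - adj_mat N H = incidence_mat N m E * (incidence_mat N m E)\<^sup>T"
proof (rule eq_matI)
  fix i k assume "i < dim_row (incidence_mat N m E * (incidence_mat N m E)\<^sup>T)"
    and "k < dim_col (incidence_mat N m E * (incidence_mat N m E)\<^sup>T)"
  then have ik: "i < N" "k < N" by (auto simp: incidence_mat_def)
  have "(incidence_mat N m E * (incidence_mat N m E)\<^sup>T) $$ (i, k)
      = (\<Sum>j\<in>{0..<m}. if i \<in> E j \<and> k \<in> E j then 1 else 0)"
    using ik by (auto simp: incidence_mat_def scalar_prod_def intro!: sum.cong)
  also have "\<dots> = real (card {j \<in> {0..<m}. i \<in> E j \<and> k \<in> E j})"
    by (simp add: sum.inter_filter[symmetric])
  also have "\<dots> = real (card {h \<in> H. i \<in> h \<and> k \<in> h})"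
    using card_filter_inj_image[OF inj] H by (simp add: lessThan_atLeast0)
  finally show "(deg_mat N H - adj_mat N H) $$ (i, k)
      = (incidence_mat N m E * (incidence_mat N m E)\<^sup>T) $$ (i, k)"
    using ik by (simp add: deg_mat_def adj_mat_def hdeg_def)
qed (auto simp: deg_mat_def adj_mat_def incidence_mat_def)

lemma hdeg_pos:
  assumes "finite H" and "no_isolated_vertices N H" and "i < N"
  shows "hdeg H i > 0"
  using assms by (auto simp: hdeg_def no_isolated_vertices_def card_gt_0_iff)

lemma norm_laplacian_eq_mult:
  assumes H: "H = E ` {..<m}" and inj: "inj_on E {..<m}" and iso: "no_isolated_vertices N H"
  shows "norm_laplacian N H
           = (inv_deg_mat N H * incidence_mat N m E) * (incidence_mat N m E)\<^sup>T"
proof -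
  have B: "incidence_mat N m E \<in> carrier_mat N m" by (simp add: incidence_mat_def)
  have D: "deg_mat N H \<in> carrier_mat N N" and A: "adj_mat N H \<in> carrier_mat N N"
    and Di: "inv_deg_mat N H \<in> carrier_mat N N"
    by (simp_all add: deg_mat_def adj_mat_def inv_deg_mat_def)
  have "finite H" using H by simp
  have "inv_deg_mat N H * deg_mat N H = 1\<^sub>m N"
    unfolding inv_deg_mat_mult[OF D]
    by (rule eq_matI) (auto simp: deg_mat_def dest: hdeg_pos[OF \<open>finite H\<close> iso])
  then have "norm_laplacian N H = inv_deg_mat N H * (deg_mat N H - adj_mat N H)"
    unfolding norm_laplacian_def using mult_minus_distrib_mat[OF Di D A] by simp
  also have "\<dots> = (inv_deg_mat N H * incidence_mat N m E) * (incidence_mat N m E)\<^sup>T"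
    unfolding deg_minus_adj_eq_incidence_gram[OF H inj] using Di B by (simp add: assoc_mult_mat)
  finally show ?thesis .
qed

locale hyperflower =
  fixes N l t :: nat and H :: "nat set set" and p :: "nat \<times> nat \<Rightarrow> nat" and h1 :: "nat set"
  assumes inj_p: "inj_on p ({..<t} \<times> {..<l})"
    and p_range: "p ` ({..<t} \<times> {..<l}) \<subseteq> {0..<N}"
    and h1_nonempty: "h1 \<noteq> {}"
    and h1_range: "h1 \<subseteq> {0..<N} - p ` ({..<t} \<times> {..<l})"
    and H_eq: "H = {h1 \<union> {p (z, j) | z. z < t} | j. j < l}"
    and no_isolated: "no_isolated_vertices N H"
    and twins_pos: "1 \<le> t"
begin

definition edge :: "nat \<Rightarrow> nat set" where
  "edge j = h1 \<union> {p (z, j) | z. z < t}"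

definition periphery :: "nat set" where
  "periphery = p ` ({..<t} \<times> {..<l})"

lemma H_eq_edge_image: "H = edge ` {..<l}"
  unfolding H_eq edge_def by auto

lemma p_in_edge_iff:
  assumes "z < t" "j0 < l" "j < l"
  shows "p (z, j0) \<in> edge j \<longleftrightarrow> j = j0"
proof
  assume "p (z, j0) \<in> edge j"
  moreover have "p (z, j0) \<notin> h1" using assms h1_range by auto
  ultimately obtain z' where "z' < t" "p (z, j0) = p (z', j)" unfolding edge_def by auto
  then show "j = j0" using assms inj_p unfolding inj_on_def by blast
qed (use assms in \<open>auto simp: edge_def\<close>)

lemma inj_on_edge: "inj_on edge {..<l}"
proof (rule inj_onI)
  fix j j' assume j: "j \<in> {..<l}" "j' \<in> {..<l}" and "edge j = edge j'"
  moreover have "p (0, j) \<in> edge j" using twins_pos by (auto simp: edge_def)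
  ultimately have "p (0, j) \<in> edge j'" by simp
  then show "j = j'" using p_in_edge_iff[of 0 j j'] twins_pos j by simp
qed

lemma petals_pos: "1 \<le> l"
proof (rule ccontr)
  assume "\<not> 1 \<le> l"
  then have "H = {}" by (simp add: H_eq_edge_image not_less_eq_eq)
  moreover obtain i where "i \<in> h1" using h1_nonempty by auto
  then have "i < N" using h1_range by auto
  ultimately show False using no_isolated by (auto simp: no_isolated_vertices_def)
qed

lemma vertices_eq: "{0..<N} = h1 \<union> periphery"
proof
  show "h1 \<union> periphery \<subseteq> {0..<N}" using h1_range p_range by (auto simp: periphery_def)
  show "{0..<N} \<subseteq> h1 \<union> periphery"
    using no_isolated
    by (auto simp: no_isolated_vertices_def H_eq_edge_image edge_def periphery_def)
qed

lemma h1_periphery_disjoint: "h1 \<inter> periphery = {}"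
  using h1_range by (auto simp: periphery_def)

lemma finite_h1: "finite h1" and finite_periphery: "finite periphery"
  using vertices_eq by (metis finite_Un finite_atLeastLessThan)+

lemma card_vertices: "N = card h1 + t * l"
proof -
  have "card periphery = t * l"
    using inj_p by (simp add: periphery_def card_image card_cartesian_product)
  then show ?thesis
    using card_Un_disjoint[OF finite_h1 finite_periphery h1_periphery_disjoint] vertices_eq
    by (metis card_atLeastLessThan diff_zero)
qed

lemma hdeg_eq_card_edges: "hdeg H i = card {j \<in> {..<l}. i \<in> edge j}"
  unfolding hdeg_def H_eq_edge_image by (rule card_filter_inj_image[OF inj_on_edge])

lemma hdeg_h1: "i \<in> h1 \<Longrightarrow> hdeg H i = l"
  by (simp add: hdeg_eq_card_edges edge_def)

lemma hdeg_periphery: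
  assumes "i \<in> periphery"
  shows "hdeg H i = 1"
proof -
  obtain z j0 where "z < t" "j0 < l" "i = p (z, j0)" using assms by (auto simp: periphery_def)
  then have "{j \<in> {..<l}. i \<in> edge j} = {j0}" using p_in_edge_iff by auto
  then show ?thesis by (simp add: hdeg_eq_card_edges)
qed

lemma periphery_in_edges_iff:
  assumes "i \<in> periphery" "j < l" "j' < l"
  shows "i \<in> edge j \<and> i \<in> edge j' \<longleftrightarrow> j = j' \<and> i \<in> p ` ({..<t} \<times> {j})"
proof -
  obtain z j0 where "z < t" "j0 < l" "i = p (z, j0)" using assms(1) by (auto simp: periphery_def)
  then show ?thesis
    using assms p_in_edge_iff inj_p by (auto simp: inj_on_def)
qed

lemma card_periphery_common:
  assumes "j < l" "j' < l"
  shows "card {i \<in> periphery. i \<in> edge j \<and> i \<in> edge j'} = (if j = j' then t else 0)"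
proof -
  have common: "{i \<in> periphery. i \<in> edge j \<and> i \<in> edge j'}
      = (if j = j' then p ` ({..<t} \<times> {j}) else {})"
    using periphery_in_edges_iff[OF _ assms] assms by (auto simp: periphery_def)
  have "inj_on p ({..<t} \<times> {j})" by (rule inj_on_subset[OF inj_p]) (use assms in auto)
  then show ?thesis
    unfolding common by (cases "j = j'") (simp_all add: card_image card_cartesian_product)
qed

lemma incidence_gram:
  "(incidence_mat N l edge)\<^sup>T * (inv_deg_mat N H * incidence_mat N l edge)
     = mat l l (\<lambda>(j, j'). real (card h1) / real l + (if j = j' then real t else 0))"
  (is "?G = ?M")
proof (rule eq_matI)
  fix j j' assume "j < dim_row ?M" "j' < dim_col ?M"
  then have j: "j < l" and j': "j' < l" by auto
  define f where "f i = (if i \<in> edge j \<and> i \<in> edge j' then 1 / real (hdeg H i) else 0)" for i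
  have "inv_deg_mat N H * incidence_mat N l edge
      = mat N l (\<lambda>(i, j). if i \<in> edge j then 1 / real (hdeg H i) else 0)"
    by (subst inv_deg_mat_mult) (auto simp: incidence_mat_def)
  then have "((incidence_mat N l edge)\<^sup>T * (inv_deg_mat N H * incidence_mat N l edge)) $$ (j, j')
      = (\<Sum>i\<in>{0..<N}. f i)"
    using j j' by (auto simp: incidence_mat_def f_def scalar_prod_def intro!: sum.cong)
  also have "\<dots> = (\<Sum>i\<in>h1. f i) + (\<Sum>i\<in>periphery. f i)"
    unfolding vertices_eq
    by (rule sum.union_disjoint[OF finite_h1 finite_periphery h1_periphery_disjoint])
  also have "(\<Sum>i\<in>h1. f i) = real (card h1) / real l"
    by (simp add: f_def hdeg_h1 edge_def)
  also have "(\<Sum>i\<in>periphery. f i) = real (card {i \<in> periphery. i \<in> edge j \<and> i \<in> edge j'})"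
    by (simp add: f_def hdeg_periphery sum.inter_filter[symmetric] finite_periphery cong: if_cong)
  finally show "((incidence_mat N l edge)\<^sup>T * (inv_deg_mat N H * incidence_mat N l edge)) $$ (j, j')
      = mat l l (\<lambda>(j, j'). real (card h1) / real l + (if j = j' then real t else 0)) $$ (j, j')"
    using j j' by (simp add: card_periphery_common)
qed (auto simp: incidence_mat_def)

lemma char_poly_norm_laplacian:
  "char_poly (norm_laplacian N H)
     = [:0, 1:] ^ (N - l) * [:- real t, 1:] ^ (l - 1) * [:- (real t + real (card h1)), 1:]"
proof -
  define U where "U = inv_deg_mat N H * incidence_mat N l edge"
  define V where "V = (incidence_mat N l edge)\<^sup>T"
  have U: "U \<in> carrier_mat N l" and V: "V \<in> carrier_mat l N"
    unfolding U_def V_def by (auto simp: incidence_mat_def inv_deg_mat_def intro!: mult_carrier_mat)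
  have L: "norm_laplacian N H = U * V"
    unfolding U_def V_def by (rule norm_laplacian_eq_mult[OF H_eq_edge_image inj_on_edge no_isolated])
  have VU: "char_poly (V * U) = [:- real t, 1:] ^ (l - 1) * [:- (real t + real (card h1)), 1:]"
    using char_poly_const_plus_diag[OF petals_pos, of "real (card h1) / real l" "real t"] petals_pos
    by (simp add: U_def V_def incidence_gram)
  have X: "monom 1 N = monom 1 l * [:0, 1 :: real:] ^ (N - l)"
  proof -
    have "l \<le> N" using card_vertices twins_pos by (simp add: trans_le_add2)
    then have "monom 1 N = monom 1 l * monom (1 :: real) (N - l)" by (simp add: mult_monom)
    then show ?thesis by (simp add: monom_altdef)
  qed
  have "monom 1 l * char_poly (norm_laplacian N H)
      = monom 1 l * ([:0, 1:] ^ (N - l) * char_poly (V * U))"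
    using char_poly_mult_commute[OF U V] unfolding L X by (simp only: mult.assoc)
  then have "char_poly (norm_laplacian N H) = [:0, 1:] ^ (N - l) * char_poly (V * U)"
    by simp
  then show ?thesis unfolding VU by (simp only: mult.assoc)
qed

end

theorem mainTheorem7:
  fixes N l t :: nat and H :: "nat set set"
  assumes "is_hypergraph N H" and "no_isolated_vertices N H"
    and "is_hyperflower N H l t" and "1 \<le> t"
  shows "char_poly (norm_laplacian N H) =
           [:0, 1:] ^ (N - l) * [:- real t, 1:] ^ (l - 1)
             * [:- (real N - real t * real l + real t), 1:]
       \<and> (\<forall>x. poly (char_poly (norm_laplacian N H)) x = 0
              \<longrightarrow> x \<le> real N - real t * real l + real t)"
proof -
  obtain p h1 where "hyperflower N l t H p h1"
    using assms(2-4) unfolding is_hyperflower_def hyperflower_def by blast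
  then interpret hyperflower N l t H p h1 .
  have largest_eigenvalue: "real N - real t * real l + real t = real t + real (card h1)"
    using card_vertices by simp
  have "x \<le> real t + real (card h1)" if "poly (char_poly (norm_laplacian N H)) x = 0" for x
  proof -
    have "poly (char_poly (norm_laplacian N H)) x
        = x ^ (N - l) * (x - real t) ^ (l - 1) * (x - (real t + real (card h1)))"
      by (simp add: char_poly_norm_laplacian poly_power algebra_simps)
    then have "x = 0 \<or> x = real t \<or> x = real t + real (card h1)"
      using that by auto
    then show ?thesis by auto
  qed
  then show ?thesis using char_poly_norm_laplacian unfolding largest_eigenvalue by blast
qed

end
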